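(* Let $r\in\mathbb{R}$. For all integers $n,m,k\ge 0$ with $n\ge m+k$, \[ \binom{m+k}{m} S_{2,r}(n,m+k) = \sum_{n_1=m}^n \sum_{l=0}^m \sum_{j=0}^k \binom{n_1}{l}\binom{n-n_1}{j}\binom{n}{n_1} r^{l+j} S_2(n_1-l,m-l)\, S_2(n-n_1-j,k-j). \]
   Context: $S_2(n,k)$ denotes the Stirling numbers of the second kind, $\frac{1}{k!}(e^t-1)^k = \sum_{n\ge k} S_2(n,k)\frac{t^n}{n!}$, with $S_2(a,b)=0$ whenever $a<b$, and $\binom{a}{b}=0$ for $b>a$. For $r\in\mathbb{R}$ and integer $k\ge 0$, the extended Stirling numbers of the second kind $S_{2,r}(n,k)$ are defined by $\frac{1}{k!}(e^t-1+rt)^k = \sum_{n=k}^\infty S_{2,r}(n,k)\frac{t^n}{n!}$. *)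

theory Defs
  imports "HOL-Combinatorics.Stirling" "HOL-Computational_Algebra.Formal_Power_Series"
begin

definition ext_Stirling2 :: "real \<Rightarrow> nat \<Rightarrow> nat \<Rightarrow> real" where
  "ext_Stirling2 r n k =
     fact n * fps_nth ((fps_exp 1 - 1 + fps_const r * fps_X) ^ k) n / fact k"

end

theory Submission imports Defs begin

text \<open>The product formula is the convolution identity for exponential generating functions,
applied to \<open>(e\<^sup>t - 1 + r t)\<^sup>m\<^sup>+\<^sup>k = (e\<^sup>t - 1 + r t)\<^sup>m (e\<^sup>t - 1 + r t)\<^sup>k\<close>. Each factor is expanded
binomially in \<open>r t\<close>, and \<open>(e\<^sup>t - 1)\<^sup>k / k!\<close> is the exponential generating function of
\<open>S\<^sub>2(-, k)\<close>; terms with \<open>n\<^sub>1 < m\<close> vanish because \<open>t\<^sup>m\<close> divides the first factor.\<close>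

lemma fps_nth_exp_minus_one_power:
  "fps_nth ((fps_exp 1 - 1 :: 'a :: field_char_0 fps) ^ k) n = of_nat (Stirling n k) * fact k / fact n"
proof (induction n arbitrary: k)
  case 0
  then show ?case by (cases k) (simp_all add: fps_nth_power_0)
next
  case (Suc n)
  show ?case
  proof (cases k)
    case 0
    then show ?thesis by simp
  next
    case (Suc k')
    define E :: "'a fps" where "E = fps_exp 1 - 1"
    \<comment> \<open>\<open>E' = E + 1\<close> turns the derivative of \<open>E\<^sup>k\<^sup>+\<^sup>1\<close> into the Stirling recurrence.\<close>
    have "fps_deriv (E ^ Suc k') = fps_const (of_nat (Suc k')) * (E ^ Suc k' + E ^ k')"
      unfolding E_def fps_deriv_power by (simp add: algebra_simps)
    then have "of_nat (Suc n) * fps_nth (E ^ Suc k') (Suc n)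
        = of_nat (Suc k') * (fps_nth (E ^ Suc k') n + fps_nth (E ^ k') n)"
      by (metis fps_deriv_nth fps_mult_left_const_nth fps_add_nth Suc_eq_plus1)
    also have "\<dots> = of_nat (Suc k') * (of_nat (Stirling n (Suc k')) * fact (Suc k') / fact n
        + of_nat (Stirling n k') * fact k' / fact n)"
      by (simp only: E_def Suc.IH)
    also have "\<dots> = of_nat (Suc n) * (of_nat (Stirling (Suc n) (Suc k')) * fact (Suc k') / fact (Suc n))"
      using fact_Suc[of n, where 'a='a]
      by (simp add: field_simps del: of_nat_Suc fact_Suc) (simp add: algebra_simps)
    finally show ?thesis
      by (simp only: E_def \<open>k = Suc k'\<close> mult_left_cancel of_nat_eq_0_iff)
  qed
qed

lemma fact_mult_fps_mult_nth:
  fixes f g :: "'a :: field_char_0 fps"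
  shows "fact n * fps_nth (f * g) n =
    (\<Sum>i = 0..n. of_nat (n choose i) * (fact i * fps_nth f i) * (fact (n - i) * fps_nth g (n - i)))"
  unfolding fps_mult_nth sum_distrib_left
  by (rule sum.cong[OF refl]) (simp add: binomial_fact field_simps)

lemma ext_Stirling2_eq_sum_Stirling:
  "ext_Stirling2 r n m = (\<Sum>l = 0..m. real (n choose l) * r ^ l * real (Stirling (n - l) (m - l)))"
proof -
  define E :: "real fps" where "E = fps_exp 1 - 1"
  have binomial: "(E + fps_const r * fps_X) ^ m =
      (\<Sum>l = 0..m. fps_const (real (m choose l) * r ^ l) * (fps_X ^ l * E ^ (m - l)))"
    by (subst add.commute, subst binomial_ring)
       (simp add: atMost_atLeast0 fps_of_nat[symmetric] power_mult_distrib mult_ac)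
  have "ext_Stirling2 r n m = (\<Sum>l = 0..m. fact n / fact m * (real (m choose l) * r ^ l *
      (if n < l then 0 else real (Stirling (n - l) (m - l)) * fact (m - l) / fact (n - l))))"
    unfolding ext_Stirling2_def E_def[symmetric] binomial fps_sum_nth
    by (simp add: fps_X_power_mult_nth E_def fps_nth_exp_minus_one_power
        sum_distrib_left sum_divide_distrib cong: if_cong)
  also have "\<dots> = (\<Sum>l = 0..m. real (n choose l) * r ^ l * real (Stirling (n - l) (m - l)))"
    by (rule sum.cong[OF refl]) (auto simp: binomial_fact field_simps)
  finally show ?thesis .
qed

lemma ext_Stirling2_eq_0:
  assumes "n < m"
  shows "ext_Stirling2 r n m = 0"
  unfolding ext_Stirling2_eq_sum_Stirling using assms
  by (intro sum.neutral) auto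

lemma binomial_mult_ext_Stirling2_add:
  "real ((m + k) choose m) * ext_Stirling2 r n (m + k) =
    (\<Sum>i = 0..n. real (n choose i) * ext_Stirling2 r i m * ext_Stirling2 r (n - i) k)"
proof -
  define F :: "real fps" where "F = fps_exp 1 - 1 + fps_const r * fps_X"
  have "real ((m + k) choose m) * ext_Stirling2 r n (m + k) =
      fact n * fps_nth (F ^ m * F ^ k) n / (fact m * fact k)"
    by (simp add: ext_Stirling2_def F_def binomial_fact power_add)
  also have "\<dots> = (\<Sum>i = 0..n. real (n choose i) * ext_Stirling2 r i m * ext_Stirling2 r (n - i) k)"
    unfolding fact_mult_fps_mult_nth sum_divide_distrib ext_Stirling2_def F_def
    by (simp add: field_simps)
  finally show ?thesis .
qed

theorem mainTheorem6:
  fixes r :: real and n m k :: nat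
  assumes "n \<ge> m + k"
  shows "real ((m + k) choose m) * ext_Stirling2 r n (m + k) =
    (\<Sum>n1 = m..n. \<Sum>l = 0..m. \<Sum>j = 0..k.
       real (n1 choose l) * real ((n - n1) choose j) * real (n choose n1) * r ^ (l + j)
       * real (Stirling (n1 - l) (m - l)) * real (Stirling (n - n1 - j) (k - j)))"
proof -
  let ?term = "\<lambda>i. real (n choose i) * ext_Stirling2 r i m * ext_Stirling2 r (n - i) k"
  have "real ((m + k) choose m) * ext_Stirling2 r n (m + k) = (\<Sum>i = 0..n. ?term i)"
    by (rule binomial_mult_ext_Stirling2_add)
  also have "\<dots> = (\<Sum>i = m..n. ?term i)"
    \<comment> \<open>Only \<open>S\<^sub>2\<^sub>,\<^sub>r(i, m) = 0\<close> for \<open>i < m\<close> is used.\<close>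
    by (rule sum.mono_neutral_right) (auto simp: ext_Stirling2_eq_0)
  also have "\<dots> = (\<Sum>n1 = m..n. \<Sum>l = 0..m. \<Sum>j = 0..k.
       real (n1 choose l) * real ((n - n1) choose j) * real (n choose n1) * r ^ (l + j)
       * real (Stirling (n1 - l) (m - l)) * real (Stirling (n - n1 - j) (k - j)))"
    unfolding ext_Stirling2_eq_sum_Stirling sum_distrib_left sum_distrib_right
    by (rule sum.cong[OF refl], subst sum.swap) (simp add: power_add mult_ac)
  finally show ?thesis .
qed

end
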